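(* Let $f\geq 1$ be an integer, let $\zeta\in\mathbf{C}$ with $\zeta^f=1$, and let $x\in\mathbf{C}$ with $|x|\geq 1-\frac{1}{2f}$. Set $x'=x-\frac{x^f-1}{fx^{f-1}}$. Then $|x'-\zeta|\leq f|x-\zeta|^2$. *)

theory Defs
  imports "HOL-Analysis.Analysis"
begin

end

theory Submission
  imports Defs
begin

text \<open>Newton's method for \<open>x\<^sup>f - 1\<close> has error
  \<open>x' - \<zeta> = (x - \<zeta>)\<^sup>2 Q / (f x\<^sup>f\<^sup>-\<^sup>1)\<close>, where \<open>Q\<close> is a sum of \<open>f(f-1)/2\<close> monomials
  \<open>x\<^sup>k \<zeta>\<^sup>l\<close> with \<open>k < f\<close>.  Since \<open>|\<zeta>| = 1\<close> and, by Bernoulli's inequality, the lower bound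
  on \<open>|x|\<close> gives \<open>|x|\<^sup>k \<le> 2 |x|\<^sup>f\<^sup>-\<^sup>1\<close> for all \<open>k < f\<close>, we get
  \<open>|Q| \<le> f(f-1) |x|\<^sup>f\<^sup>-\<^sup>1\<close>, and hence \<open>|x' - \<zeta>| \<le> (f - 1) |x - \<zeta>|\<^sup>2\<close>.\<close>

definition newton_remainder :: "nat \<Rightarrow> 'a::comm_ring_1 \<Rightarrow> 'a \<Rightarrow> 'a" where
  "newton_remainder n x z = (\<Sum>i<n. x ^ i * (\<Sum>j<n - Suc i. z ^ (n - Suc i - Suc j) * x ^ j))"

lemma newton_remainder_eq:
  fixes x z :: "'a::comm_ring_1"
  shows "of_nat n * x ^ (n - 1) * (x - z) - (x ^ n - z ^ n) = (x - z)\<^sup>2 * newton_remainder n x z"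
proof -
  have inner: "x ^ (n - 1) - z ^ (n - Suc i) * x ^ i
      = x ^ i * ((x - z) * (\<Sum>j<n - Suc i. z ^ (n - Suc i - Suc j) * x ^ j))" if "i < n" for i
  proof -
    have "x ^ (n - 1) = x ^ i * x ^ (n - Suc i)"
      using that by (simp flip: power_add)
    then have "x ^ (n - 1) - z ^ (n - Suc i) * x ^ i = x ^ i * (x ^ (n - Suc i) - z ^ (n - Suc i))"
      by (simp add: algebra_simps)
    then show ?thesis
      by (simp only: power_diff_sumr2)
  qed
  have "of_nat n * x ^ (n - 1) * (x - z) - (x ^ n - z ^ n)
      = (x - z) * (\<Sum>i<n. x ^ (n - 1) - z ^ (n - Suc i) * x ^ i)"
    by (simp add: power_diff_sumr2 sum_subtractf sum_distrib_left algebra_simps)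
  also have "\<dots> = (x - z) * (\<Sum>i<n. x ^ i * ((x - z) * (\<Sum>j<n - Suc i. z ^ (n - Suc i - Suc j) * x ^ j)))"
    using inner by simp
  also have "\<dots> = (x - z)\<^sup>2 * newton_remainder n x z"
    by (simp add: newton_remainder_def sum_distrib_left power2_eq_square algebra_simps)
  finally show ?thesis .
qed

lemma newton_step_error:
  fixes x z :: "'a::field_char_0"
  assumes "x \<noteq> 0" and "n \<noteq> 0"
  shows "x - (x ^ n - z ^ n) / (of_nat n * x ^ (n - 1)) - z
    = (x - z)\<^sup>2 * newton_remainder n x z / (of_nat n * x ^ (n - 1))"
proof -
  have "of_nat n * x ^ (n - 1) \<noteq> 0"
    using assms by simp
  then have "x - (x ^ n - z ^ n) / (of_nat n * x ^ (n - 1)) - z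
      = (of_nat n * x ^ (n - 1) * (x - z) - (x ^ n - z ^ n)) / (of_nat n * x ^ (n - 1))"
    by (simp add: field_simps)
  then show ?thesis
    by (simp only: newton_remainder_eq)
qed

lemma double_sum_pred_diff: "2 * (\<Sum>i<n. n - Suc i) = n * (n - 1)"
proof -
  have "(\<Sum>i<n. n - Suc i) = (\<Sum>i<n. i)"
    by (rule sum.nat_diff_reindex)
  also have "2 * \<dots> = n * (n - 1)"
    by (induction n) (auto simp: algebra_simps)
  finally show ?thesis .
qed

lemma norm_newton_remainder_le:
  fixes x z :: "'a::real_normed_field"
  assumes "norm z = 1" and "\<And>k. k < n \<Longrightarrow> norm x ^ k \<le> C"
  shows "2 * norm (newton_remainder n x z) \<le> real (n * (n - 1)) * C"
proof -
  have "norm (newton_remainder n x z)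
      \<le> (\<Sum>i<n. norm (x ^ i) * (\<Sum>j<n - Suc i. norm (z ^ (n - Suc i - Suc j) * x ^ j)))"
    unfolding newton_remainder_def
    by (intro order.trans [OF norm_sum] sum_mono)
       (simp only: norm_mult [of "x ^ _"] mult_left_mono norm_sum norm_ge_zero)
  also have "\<dots> = (\<Sum>i<n. \<Sum>j<n - Suc i. norm x ^ (i + j))"
    by (simp add: norm_mult norm_power assms(1) sum_distrib_left power_add)
  also have "\<dots> \<le> (\<Sum>i<n. \<Sum>j<n - Suc i. C)"
    by (intro sum_mono assms(2)) auto
  also have "\<dots> = real (\<Sum>i<n. n - Suc i) * C"
    by (simp add: sum_distrib_right)
  finally show ?thesis
    by (simp only: double_sum_pred_diff [symmetric] of_nat_mult of_nat_numeral mult.assoc)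
qed

lemma power_le_twice_power_pred:
  fixes r :: real
  assumes r: "r \<ge> 1 - 1 / (2 * real n)" and "k < n"
  shows "r ^ k \<le> 2 * r ^ (n - 1)"
proof -
  have "1 / (2 * real n) \<le> 1 / 2"
    using \<open>k < n\<close> by (simp add: field_simps)
  with r have "r \<ge> 1 / 2"
    by linarith
  show ?thesis
  proof (cases "r \<ge> 1")
    case True
    then have "r ^ k \<le> r ^ (n - 1)"
      using \<open>k < n\<close> by (simp add: power_increasing)
    moreover have "r ^ (n - 1) \<ge> 0"
      using \<open>r \<ge> 1\<close> by simp
    ultimately show ?thesis
      by linarith
  next
    case False
    have "real (n - 1) * (1 - r) \<le> real n * (1 / (2 * real n))"
      using False r by (intro mult_mono) auto
    also have "\<dots> = 1 / 2"
      using \<open>k < n\<close> by simp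
    finally have "1 / 2 \<le> 1 + real (n - 1) * (r - 1)"
      by (simp add: algebra_simps)
    also have "\<dots> \<le> r ^ (n - 1)"
      using Bernoulli_inequality [of "r - 1" "n - 1"] \<open>r \<ge> 1 / 2\<close> by simp
    finally show ?thesis
      using False \<open>r \<ge> 1 / 2\<close> power_le_one [of r k] by linarith
  qed
qed

theorem lemma11:
  fixes f :: nat and \<zeta> x :: complex
  assumes "f \<ge> 1"
    and "\<zeta> ^ f = 1"
    and "norm x \<ge> 1 - 1 / (2 * real f)"
  shows "norm ((x - (x ^ f - 1) / (of_nat f * x ^ (f - 1))) - \<zeta>) \<le> real f * (norm (x - \<zeta>))^2"
proof -
  have "norm \<zeta> = 1"
    using power_eq_1_iff [OF assms(2)] assms(1) by simp
  then have "2 * norm (newton_remainder f x \<zeta>) \<le> real (f * (f - 1)) * (2 * norm x ^ (f - 1))"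
    using power_le_twice_power_pred [OF assms(3)] by (intro norm_newton_remainder_le)
  then have remainder_le: "norm (newton_remainder f x \<zeta>) \<le> real f * (real (f - 1) * norm x ^ (f - 1))"
    by simp
  have "1 / (2 * real f) \<le> 1 / 2"
    using assms(1) by (simp add: field_simps)
  then have "norm x \<noteq> 0"
    using assms(3) by linarith
  have "norm (x - (x ^ f - 1) / (of_nat f * x ^ (f - 1)) - \<zeta>)
      = (norm (x - \<zeta>))\<^sup>2 * norm (newton_remainder f x \<zeta>) / (real f * norm x ^ (f - 1))"
    using newton_step_error [of x f \<zeta>] assms \<open>norm x \<noteq> 0\<close>
    by (simp add: norm_mult norm_divide norm_power)
  also have "\<dots> \<le> (norm (x - \<zeta>))\<^sup>2 * (real f * (real (f - 1) * norm x ^ (f - 1))) / (real f * norm x ^ (f - 1))"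
    by (intro divide_right_mono mult_left_mono remainder_le) auto
  also have "\<dots> = real (f - 1) * (norm (x - \<zeta>))\<^sup>2"
    using \<open>norm x \<noteq> 0\<close> by simp
  also have "\<dots> \<le> real f * (norm (x - \<zeta>))\<^sup>2"
    by (intro mult_right_mono) auto
  finally show ?thesis .
qed

end
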